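(* Let $\mathcal{L}_q$ be any projective plane of order $q\geq 3$. Then for every sufficiently large integer $n$, $R(P^{(q+1)}_{n,q},\mathcal{L}_q)\geq \left\lfloor\frac{q+2}{q+1}(n-1)\right\rfloor$.
   Context: A projective plane $\mathcal{L}_q$ of order $q$ is a $(q+1)$-regular $(q+1)$-uniform hypergraph on $q^2+q+1$ vertices in which every pair of vertices lies in a unique edge. For $k$-uniform hypergraphs $G,H$, $R(G,H)$ is the least $N$ such that every red/blue colouring of the edges of $K^{(k)}_N$ contains a red copy of $G$ or a blue copy of $H$. The tight path $P^{(k)}_{n,k-1}$ ($n\ge k$) has vertices $v_1,\dots,v_n$ and edges $\{v_i,\dots,v_{i+k-1}\}$ for $i\in[n-k+1]$. *)

theory Defs
  imports Complex_Main "HOL-Library.Extended_Nat"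
begin

definition projective_plane :: "nat \<Rightarrow> 'a set \<Rightarrow> 'a set set \<Rightarrow> bool" where
  "projective_plane q V E \<longleftrightarrow>
     finite V \<and> card V = q^2 + q + 1 \<and>
     (\<forall>e\<in>E. e \<subseteq> V \<and> card e = q + 1) \<and>
     (\<forall>v\<in>V. card {e\<in>E. v \<in> e} = q + 1) \<and>
     (\<forall>u\<in>V. \<forall>v\<in>V. u \<noteq> v \<longrightarrow> (\<exists>!e. e \<in> E \<and> u \<in> e \<and> v \<in> e))"

definition tight_path :: "nat \<Rightarrow> nat \<Rightarrow> nat set \<times> nat set set" where
  "tight_path k n = ({1..n}, {{i..i+k-1} | i. 1 \<le> i \<and> i + k - 1 \<le> n})"

text \<open>A copy of G in the complete hypergraph on {0..<N} all of whose edges receive colour col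
  under the colouring c (True = red, False = blue).\<close>
definition has_mono_copy :: "nat \<Rightarrow> ('a set \<times> 'a set set) \<Rightarrow> (nat set \<Rightarrow> bool) \<Rightarrow> bool \<Rightarrow> bool" where
  "has_mono_copy N G c col \<longleftrightarrow>
     (\<exists>f. inj_on f (fst G) \<and> f ` fst G \<subseteq> {0..<N} \<and> (\<forall>e\<in>snd G. c (f ` e) = col))"

text \<open>Ramsey number (infinity if no such N exists).\<close>
definition ramsey_number :: "('a set \<times> 'a set set) \<Rightarrow> ('b set \<times> 'b set set) \<Rightarrow> enat" where
  "ramsey_number G H = Inf {enat N | N. \<forall>c :: nat set \<Rightarrow> bool.
       has_mono_copy N G c True \<or> has_mono_copy N H c False}"

end

(*
  Colour an edge of the complete hypergraph on {0..<N} blue iff exactly one of its vertices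
  lies in the upper block {n-1..<N}. A blue projective plane would yield a point set meeting
  every line exactly once, which does not exist. Along a red tight path the number of upper
  vertices in a window of q+1 consecutive vertices changes by at most one from window to window
  and is never one, so it is either always zero or always at least two. Always zero is impossible
  because the lower block has only n-1 vertices; otherwise the disjoint windows force at least
  2 (n div (q+1)) upper vertices. So this colouring avoids both structures whenever
  N < n - 1 + 2 (n div (q+1)), and that number is at least the claimed bound.
*)
theory Submission
  imports Defs
begin

lemma unit_steps_never_one_zero_iff:
  fixes g :: "nat \<Rightarrow> nat"
  assumes steps: "\<And>i. a \<le> i \<Longrightarrow> i < b \<Longrightarrow> g (Suc i) \<le> g i + 1 \<and> g i \<le> g (Suc i) + 1"
    and not_one: "\<And>i. a \<le> i \<Longrightarrow> i \<le> b \<Longrightarrow> g i \<noteq> 1"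
    and "a \<le> j" "j \<le> b"
  shows "g j = 0 \<longleftrightarrow> g a = 0"
  using \<open>a \<le> j\<close> \<open>j \<le> b\<close>
proof (induction j rule: dec_induct)
  case base
  then show ?case by simp
next
  case (step i)
  have "g i \<noteq> 1" "g (Suc i) \<noteq> 1"
    using not_one step.hyps step.prems by auto
  with steps[of i] step show ?case by fastforce
qed

lemma card_Int_window_Suc:
  fixes T :: "nat set"
  shows "card (T \<inter> {Suc i..<Suc i + k}) \<le> card (T \<inter> {i..<i + k}) + 1"
    and "card (T \<inter> {i..<i + k}) \<le> card (T \<inter> {Suc i..<Suc i + k}) + 1"
proof -
  have "card (T \<inter> {Suc i..<Suc i + k}) \<le> card (insert (i + k) (T \<inter> {i..<i + k}))"
    by (rule card_mono) auto
  then show "card (T \<inter> {Suc i..<Suc i + k}) \<le> card (T \<inter> {i..<i + k}) + 1"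
    by (simp add: card_insert_if split: if_splits)
  have "card (T \<inter> {i..<i + k}) \<le> card (insert i (T \<inter> {Suc i..<Suc i + k}))"
    by (rule card_mono) auto
  then show "card (T \<inter> {i..<i + k}) \<le> card (T \<inter> {Suc i..<Suc i + k}) + 1"
    by (simp add: card_insert_if split: if_splits)
qed

lemma card_Int_blocks_ge:
  fixes T :: "nat set"
  assumes windows: "\<And>i. 1 \<le> i \<Longrightarrow> i + k \<le> Suc n \<Longrightarrow> 2 \<le> card (T \<inter> {i..<i + k})"
    and "j * k \<le> n"
  shows "2 * j \<le> card (T \<inter> {1..j * k})"
  using \<open>j * k \<le> n\<close>
proof (induction j)
  case 0
  then show ?case by simp
next
  case (Suc j)
  have split: "T \<inter> {1..Suc j * k} = T \<inter> {1..j * k} \<union> T \<inter> {Suc (j * k)..<Suc (j * k) + k}"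
    by auto
  have "2 * j \<le> card (T \<inter> {1..j * k})"
    using Suc by simp
  moreover have "2 \<le> card (T \<inter> {Suc (j * k)..<Suc (j * k) + k})"
    using windows[of "Suc (j * k)"] Suc.prems by simp
  ultimately show ?case
    unfolding split by (subst card_Un_disjoint) auto
qed

lemma card_Int_windows_avoiding_one:
  fixes T :: "nat set"
  assumes "0 < k"
    and not_one: "\<And>i. 1 \<le> i \<Longrightarrow> i + k \<le> Suc n \<Longrightarrow> card (T \<inter> {i..<i + k}) \<noteq> 1"
  shows "T \<inter> {1..n} = {} \<or> 2 * (n div k) \<le> card (T \<inter> {1..n})"
proof (cases "k \<le> n")
  case False
  then show ?thesis by simp
next
  case True
  define g where "g i = card (T \<inter> {i..<i + k})" for i
  have same_as_first: "g i = 0 \<longleftrightarrow> g 1 = 0" if "1 \<le> i" "i + k \<le> Suc n" for i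
    using that card_Int_window_Suc[of T] not_one
    by (intro unit_steps_never_one_zero_iff[where b = "Suc n - k"]) (auto simp: g_def)
  show ?thesis
  proof (cases "g 1 = 0")
    case True
    have "x \<notin> T" if "x \<in> {1..n}" for x
    proof -
      define i where "i = min x (Suc n - k)"
      have "1 \<le> i" "i + k \<le> Suc n" "x \<in> {i..<i + k}"
        using that \<open>k \<le> n\<close> \<open>0 < k\<close> by (auto simp: i_def)
      with same_as_first[of i] True show ?thesis by (auto simp: g_def)
    qed
    then show ?thesis by blast
  next
    case False
    have "2 \<le> g i" if "1 \<le> i" "i + k \<le> Suc n" for i
    proof -
      have "g i \<noteq> 0" "g i \<noteq> 1"
        using same_as_first[OF that] False not_one[OF that] by (auto simp: g_def)
      then show ?thesis by linarith
    qed
    then have "2 * (n div k) \<le> card (T \<inter> {1..n div k * k})"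
      by (intro card_Int_blocks_ge[where n = n]) (auto simp: g_def)
    also have "\<dots> \<le> card (T \<inter> {1..n})"
      by (intro card_mono) (auto intro: le_trans[OF _ div_times_less_eq_dividend])
    finally show ?thesis ..
  qed
qed

lemma projective_plane_lines_nonempty:
  assumes "projective_plane q V E"
  shows "E \<noteq> {}"
proof -
  have "card V \<noteq> 0"
    using assms unfolding projective_plane_def by simp
  then obtain v where "v \<in> V"
    by (metis card.empty ex_in_conv)
  then have "card {e \<in> E. v \<in> e} \<noteq> 0"
    using assms unfolding projective_plane_def by simp
  then show ?thesis
    by (metis (no_types, lifting) card.empty empty_Collect_eq empty_iff)
qed

lemma projective_plane_line_avoiding:
  assumes plane: "projective_plane q V E" and "1 \<le> q" and "s \<in> V"
  obtains e where "e \<in> E" "s \<notin> e"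
proof -
  have "\<not> card V \<le> Suc 0" "finite V"
    using plane \<open>1 \<le> q\<close> unfolding projective_plane_def by auto
  then obtain u where u: "u \<in> V" "u \<noteq> s"
    by (metis card_le_Suc0_iff_eq)
  have "card {e \<in> E. u \<in> e} = q + 1"
    using plane u unfolding projective_plane_def by simp
  then have "\<not> card {e \<in> E. u \<in> e} \<le> Suc 0" "finite {e \<in> E. u \<in> e}"
    using \<open>1 \<le> q\<close> by (auto intro: card_ge_0_finite)
  then obtain e e' where "e \<in> E" "e' \<in> E" "u \<in> e" "u \<in> e'" "e \<noteq> e'"
    by (metis (no_types, lifting) card_le_Suc0_iff_eq mem_Collect_eq)
  moreover have "\<exists>!l. l \<in> E \<and> u \<in> l \<and> s \<in> l"
    using plane u \<open>s \<in> V\<close> unfolding projective_plane_def by blast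
  ultimately show ?thesis
    using that by blast
qed

text \<open>If every line met S once, a line avoiding a point s of S would meet S in some t \<noteq> s,
  and the line through s and t would meet S twice.\<close>
lemma projective_plane_no_one_point_transversal:
  assumes plane: "projective_plane q V E" and "1 \<le> q" and "S \<subseteq> V"
  shows "\<exists>e\<in>E. card (e \<inter> S) \<noteq> 1"
proof (rule ccontr)
  assume "\<not> ?thesis"
  then have once: "\<And>e. e \<in> E \<Longrightarrow> \<exists>x. e \<inter> S = {x}"
    by (meson card_1_singletonE)
  obtain e0 where "e0 \<in> E"
    using projective_plane_lines_nonempty[OF plane] by blast
  then obtain s where "s \<in> S"
    using once by blast
  then obtain e1 where "e1 \<in> E" "s \<notin> e1"
    using projective_plane_line_avoiding[OF plane \<open>1 \<le> q\<close>] \<open>S \<subseteq> V\<close> by blast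
  then obtain t where "t \<in> e1" "t \<in> S" "t \<noteq> s"
    using once by blast
  then obtain l where "l \<in> E" "s \<in> l" "t \<in> l"
    using plane \<open>s \<in> S\<close> \<open>S \<subseteq> V\<close> unfolding projective_plane_def by blast
  moreover obtain x where "l \<inter> S = {x}"
    using once \<open>l \<in> E\<close> by blast
  ultimately show False
    using \<open>s \<in> S\<close> \<open>t \<in> S\<close> \<open>t \<noteq> s\<close> by (metis IntI singletonD)
qed

definition split_colouring :: "nat \<Rightarrow> nat set \<Rightarrow> bool" where
  "split_colouring a X \<longleftrightarrow> card (X \<inter> {a..}) \<noteq> 1"

lemma red_tight_path_needs_high_vertices:
  assumes "0 < k" and "a < n"
    and "has_mono_copy N (tight_path k n) (split_colouring a) True"
  shows "a + 2 * (n div k) \<le> N"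
proof -
  obtain f where inj: "inj_on f {1..n}" and img: "f ` {1..n} \<subseteq> {0..<N}"
    and red: "\<forall>e \<in> {{i..i + k - 1} | i. 1 \<le> i \<and> i + k - 1 \<le> n}. split_colouring a (f ` e)"
    using assms(3) unfolding has_mono_copy_def tight_path_def by auto
  define T where "T = {x \<in> {1..n}. a \<le> f x}"
  have windows: "card (T \<inter> {i..<i + k}) \<noteq> 1" if "1 \<le> i" "i + k \<le> Suc n" for i
  proof -
    have "{i..<i + k} = {i..i + k - 1}"
      using \<open>0 < k\<close> by auto
    moreover have "{i..i + k - 1} \<in> {{i..i + k - 1} | i. 1 \<le> i \<and> i + k - 1 \<le> n}"
      using that by auto
    ultimately have "card (f ` {i..<i + k} \<inter> {a..}) \<noteq> 1"
      using red unfolding split_colouring_def by auto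
    moreover have "f ` {i..<i + k} \<inter> {a..} = f ` (T \<inter> {i..<i + k})"
      using that unfolding T_def by auto
    moreover have "inj_on f (T \<inter> {i..<i + k})"
      using inj by (rule inj_on_subset) (auto simp: T_def)
    ultimately show ?thesis
      by (simp add: card_image)
  qed
  have "T \<noteq> {}"
  proof
    assume "T = {}"
    then have "f ` {1..n} \<subseteq> {0..<a}"
      using img by (auto simp: T_def)
    then have "card {1..n} \<le> card {0..<a}"
      by (rule card_inj_on_le[OF inj]) simp
    with \<open>a < n\<close> show False
      by simp
  qed
  moreover have "T \<inter> {1..n} = T"
    by (auto simp: T_def)
  ultimately have "2 * (n div k) \<le> card T"
    using card_Int_windows_avoiding_one[of k n T, OF \<open>0 < k\<close> windows] by auto
  moreover have "card T \<le> N - a"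
  proof -
    have "f ` T \<subseteq> {a..<N}"
      using img unfolding T_def by fastforce
    moreover have "inj_on f T"
      using inj by (rule inj_on_subset) (auto simp: T_def)
    ultimately have "card T \<le> card {a..<N}"
      by (intro card_inj_on_le) simp_all
    then show ?thesis
      by simp
  qed
  moreover have "a < N"
  proof -
    obtain x where "x \<in> T"
      using \<open>T \<noteq> {}\<close> by blast
    then have "a \<le> f x" "f x < N"
      using img unfolding T_def by fastforce+
    then show ?thesis
      by simp
  qed
  ultimately show ?thesis
    by linarith
qed

lemma no_blue_projective_plane:
  assumes plane: "projective_plane q V E" and "1 \<le> q"
  shows "\<not> has_mono_copy N (V, E) (split_colouring a) False"
proof
  assume "has_mono_copy N (V, E) (split_colouring a) False"
  then obtain f where inj: "inj_on f V" and blue: "\<And>e. e \<in> E \<Longrightarrow> card (f ` e \<inter> {a..}) = 1"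
    unfolding has_mono_copy_def split_colouring_def by auto
  define S where "S = {v \<in> V. a \<le> f v}"
  have "card (e \<inter> S) = 1" if "e \<in> E" for e
  proof -
    have "e \<subseteq> V"
      using plane that unfolding projective_plane_def by blast
    then have "f ` e \<inter> {a..} = f ` (e \<inter> S)"
      unfolding S_def by auto
    moreover have "inj_on f (e \<inter> S)"
      using inj by (rule inj_on_subset) (auto simp: S_def)
    ultimately show ?thesis
      using blue[OF that] by (simp add: card_image)
  qed
  moreover have "S \<subseteq> V"
    unfolding S_def by blast
  ultimately show False
    using projective_plane_no_one_point_transversal[OF plane \<open>1 \<le> q\<close>] by blast
qed

lemma ramsey_number_ge:
  assumes "\<And>N. N < M \<Longrightarrow> \<exists>c. \<not> has_mono_copy N G c True \<and> \<not> has_mono_copy N H c False"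
  shows "enat M \<le> ramsey_number G H"
  unfolding ramsey_number_def
proof (rule Inf_greatest, clarify)
  fix N
  assume "\<forall>c. has_mono_copy N G c True \<or> has_mono_copy N H c False"
  then show "enat M \<le> enat N"
    using assms by (meson enat_ord_simps(1) not_le)
qed

lemma nat_floor_succ_ratio_le:
  fixes q n :: nat
  shows "nat \<lfloor>real (q + 2) / real (q + 1) * (real n - 1)\<rfloor> \<le> n - 1 + (n - 1) div (q + 1)"
proof (cases "n = 0")
  case True
  then have "real (q + 2) / real (q + 1) * (real n - 1) \<le> 0"
    by simp
  then show ?thesis
    by linarith
next
  case False
  define d r where "d = (n - 1) div (q + 1)" and "r = (n - 1) mod (q + 1)"
  have "n - 1 = d * (q + 1) + r"
    unfolding d_def r_def by (rule div_mult_mod_eq[symmetric])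
  then have "real n - 1 = real d * real (q + 1) + real r"
    using False by (metis of_nat_1 of_nat_add of_nat_diff of_nat_mult less_one not_less)
  then have "real (q + 2) / real (q + 1) * (real n - 1) = real (n - 1 + d) + real r / real (q + 1)"
    using False by (simp add: field_simps of_nat_diff)
  also have "\<dots> < real (n - 1 + d) + 1"
  proof -
    have "r < q + 1"
      unfolding r_def by simp
    then show ?thesis
      by (simp add: divide_less_eq)
  qed
  finally have "\<lfloor>real (q + 2) / real (q + 1) * (real n - 1)\<rfloor> \<le> int (n - 1 + d)"
    by (simp add: floor_le_iff)
  then show ?thesis
    unfolding d_def by (simp add: nat_le_iff)
qed

theorem corollary1p11:
  fixes q :: nat and V :: "'a set" and E :: "'a set set"
  assumes "q \<ge> 3" and "projective_plane q V E"
  shows "\<exists>n0. \<forall>n\<ge>n0. ramsey_number (tight_path (q+1) n) (V, E)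
            \<ge> enat (nat \<lfloor>real (q+2) / real (q+1) * (real n - 1)\<rfloor>)"
proof -
  have "1 \<le> q"
    using assms(1) by simp
  have "enat (nat \<lfloor>real (q+2) / real (q+1) * (real n - 1)\<rfloor>)
      \<le> ramsey_number (tight_path (q+1) n) (V, E)" if "1 \<le> n" for n
  proof (rule ramsey_number_ge)
    fix N
    assume "N < nat \<lfloor>real (q+2) / real (q+1) * (real n - 1)\<rfloor>"
    also have "\<dots> \<le> n - 1 + (n - 1) div (q + 1)"
      by (rule nat_floor_succ_ratio_le)
    also have "\<dots> \<le> n - 1 + 2 * (n div (q + 1))"
      using div_le_mono[of "n - 1" n "q + 1"] by simp
    finally have "N < n - 1 + 2 * (n div (q + 1))" .
    moreover have "n - 1 < n"
      using \<open>1 \<le> n\<close> by simp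
    ultimately have "\<not> has_mono_copy N (tight_path (q+1) n) (split_colouring (n - 1)) True"
      using red_tight_path_needs_high_vertices[of "q + 1" "n - 1" n N] leD by blast
    moreover have "\<not> has_mono_copy N (V, E) (split_colouring (n - 1)) False"
      using no_blue_projective_plane[OF assms(2) \<open>1 \<le> q\<close>] .
    ultimately show "\<exists>c. \<not> has_mono_copy N (tight_path (q+1) n) c True
        \<and> \<not> has_mono_copy N (V, E) c False"
      by blast
  qed
  then show ?thesis
    by (intro exI[of _ 1] allI impI)
qed

end
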